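(* Consider group testing with $p$ items, $k=\Theta(p^\theta)$ defectives ($\theta\in(0,1)$), i.i.d. Bernoulli testing with parameter $\nu>0$, and $Z$-channel noise with parameter $\rho\in(0,1)$. For a defective item $i\in S$, let $M_i^+$ (resp. $M_i^-$) be the number of positive (resp. negative) tests containing $i$ and no other defective item. Fix $\gamma>0$ and $\rho\le\Psi<1$, and let $d=\Psi\nu e^{-\nu}\gamma\log p$ and $n=\gamma k\log p$. If $\theta>e^{-\nu}\nu\gamma(D_\rho(\Psi)+1-\rho)$, then with probability tending to one as $p\to\infty$ there exists a defective item $i\in S$ with $M_i^+=0$ and $M_i^-\ge d$.
   Context: Setup: unknown defective set $S$ uniform among size-$k$ subsets of $\{1,\dots,p\}$, $p\to\infty$. Test matrix $\mathbf X\in\{0,1\}^{n\times p}$ with i.i.d. Bernoulli$(\nu/k)$ entries ($X_{ij}=1$ iff item $j$ is in test $i$). Noiseless outcome $U_i=\bigvee_{j\in S}X_{ij}$; observed outcome $Y_i$ obtained independently via the $Z$-channel: $P(Y=0|U=0)=1$, $P(Y=0|U=1)=\rho$, $P(Y=1|U=1)=1-\rho$. Positive test: $Y_i=1$; negative test: $Y_i=0$. Natural logarithms. $D_\gamma(t)=t\log(t/\gamma)-t+\gamma$ for $\gamma>0$, $t\ge0$. *)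

theory Defs
  imports "HOL-Probability.Probability" "HOL-Library.Landau_Symbols"
begin

definition Dfun :: "real \<Rightarrow> real \<Rightarrow> real" where
  "Dfun g t = t * ln (t / g) - t + g"

definition gt_pmf ::
  "nat \<Rightarrow> nat \<Rightarrow> nat \<Rightarrow> real \<Rightarrow> real \<Rightarrow>
   (nat set \<times> (nat \<times> nat \<Rightarrow> bool) \<times> (nat \<Rightarrow> bool)) pmf" where
  "gt_pmf p k n \<nu> \<rho> =
     do {
       S \<leftarrow> pmf_of_set {S. S \<subseteq> {1..p} \<and> card S = k};
       X \<leftarrow> Pi_pmf ({0..<n} \<times> {1..p}) False (\<lambda>_. bernoulli_pmf (\<nu> / real k));
       Y \<leftarrow> Pi_pmf {0..<n} False
              (\<lambda>t. if (\<exists>j\<in>S. X (t, j)) then bernoulli_pmf (1 - \<rho>) else return_pmf False);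
       return_pmf (S, X, Y)
     }"

definition Mplus :: "nat \<Rightarrow> nat set \<Rightarrow> (nat \<times> nat \<Rightarrow> bool) \<Rightarrow> (nat \<Rightarrow> bool) \<Rightarrow> nat \<Rightarrow> nat" where
  "Mplus n S X Y i = card {t \<in> {0..<n}. X (t, i) \<and> (\<forall>j\<in>S - {i}. \<not> X (t, j)) \<and> Y t}"

definition Mminus :: "nat \<Rightarrow> nat set \<Rightarrow> (nat \<times> nat \<Rightarrow> bool) \<Rightarrow> (nat \<Rightarrow> bool) \<Rightarrow> nat \<Rightarrow> nat" where
  "Mminus n S X Y i = card {t \<in> {0..<n}. X (t, i) \<and> (\<forall>j\<in>S - {i}. \<not> X (t, j)) \<and> \<not> Y t}"

end

theory Submission
  imports Defs "HOL-Real_Asymp.Real_Asymp"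
begin

text \<open>
  Condition on the defective set \<open>S\<close>, of size \<open>k\<close>, and call \<open>i \<in> S\<close> good if exactly
  \<open>m = \<lceil>d\<rceil>\<close> of the tests isolating \<open>i\<close> (containing \<open>i\<close> and no other defective) are
  negative and none is positive. The tests are i.i.d., a test isolates \<open>i\<close> with probability
  \<open>r = q (1 - q)\<^bsup>k - 1\<^esup>\<close> where \<open>q = \<nu> / k\<close>, so \<open>i\<close> is good with probability
  \<open>P = (n choose m) (r \<rho>)\<^sup>m (1 - r)\<^bsup>n - m\<^esup>\<close>, and two distinct defectives are both good
  with probability at most \<open>P\<^sup>2 / (1 - r)\<^bsup>2m\<^esup>\<close>. By the second moment method no defective
  is good with probability at most \<open>1 / (k P) + 1 / (1 - r)\<^bsup>2m\<^esup> - 1\<close>.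

  Asymptotically \<open>k r \<rightarrow> \<nu> e\<^bsup>-\<nu>\<^esup>\<close> and \<open>m r \<rightarrow> 0\<close>, so the second term tends to \<open>1\<close>, while
  a Stirling-type bound on the binomial coefficient gives
  \<open>ln (k P) \<ge> (\<theta> - e\<^bsup>-\<nu>\<^esup> \<nu> \<gamma> (D\<^sub>\<rho>(\<Psi>) + 1 - \<rho>) - o(1)) ln p\<close>,
  which tends to infinity by the hypothesis on \<open>\<theta>\<close>.
\<close>

section \<open>Product distributions\<close>

lemma measure_bind_pmf:
  "measure_pmf.prob (bind_pmf M f) A = measure_pmf.expectation M (\<lambda>x. measure_pmf.prob (f x) A)"
  unfolding measure_pmf_bind
  by (rule measure_pmf.measure_bind[where N = "count_space UNIV"])
     (simp_all add: measurable_count_space_eq1 measure_pmf_in_subprob_algebra cong: measurable_cong_sets)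

lemma measure_bind_pmf_ge:
  assumes "\<And>x. x \<in> set_pmf M \<Longrightarrow> measure_pmf.prob (f x) A \<ge> c"
  shows "measure_pmf.prob (bind_pmf M f) A \<ge> c"
proof -
  have "measure_pmf.expectation M (\<lambda>_. c) \<le> measure_pmf.expectation M (\<lambda>x. measure_pmf.prob (f x) A)"
    by (intro integral_mono_AE)
       (auto simp: AE_measure_pmf_iff assms intro!: measure_pmf.integrable_const_bound[where B = 1])
  thus ?thesis by (simp add: measure_bind_pmf)
qed

lemma Pi_pmf_map_dependent:
  assumes "finite A"
  shows "Pi_pmf A dflt' (\<lambda>x. map_pmf (f x) (g x)) =
         map_pmf (\<lambda>h x. if x \<in> A then f x (h x) else dflt') (Pi_pmf A dflt g)"
  unfolding map_pmf_def using assms by (subst Pi_pmf_bind[where d' = dflt]) simp_all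

lemma Pi_pmf_curry:
  assumes A: "finite A" and B: "finite B"
  shows "map_pmf curry (Pi_pmf (A \<times> B) dflt (\<lambda>_. D)) =
         Pi_pmf A (\<lambda>_. dflt) (\<lambda>_. Pi_pmf B dflt (\<lambda>_. D))"
proof (rule pmf_eqI)
  fix g :: "'a \<Rightarrow> 'b \<Rightarrow> 'c"
  have "inj curry" by (rule inj_on_inverseI[of _ case_prod]) simp
  hence "pmf (map_pmf curry (Pi_pmf (A \<times> B) dflt (\<lambda>_. D))) g =
         pmf (Pi_pmf (A \<times> B) dflt (\<lambda>_. D)) (case_prod g)"
    using pmf_map_inj'[of curry _ "case_prod g"] by simp
  also have "\<dots> = pmf (Pi_pmf A (\<lambda>_. dflt) (\<lambda>_. Pi_pmf B dflt (\<lambda>_. D))) g"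
  proof (cases "\<forall>x y. (x, y) \<notin> A \<times> B \<longrightarrow> g x y = dflt")
    case True
    hence "pmf (Pi_pmf (A \<times> B) dflt (\<lambda>_. D)) (case_prod g) = (\<Prod>x\<in>A. \<Prod>y\<in>B. pmf D (g x y))"
      using A B by (simp add: pmf_Pi prod.cartesian_product split_def)
    also have "\<dots> = (\<Prod>x\<in>A. pmf (Pi_pmf B dflt (\<lambda>_. D)) (g x))"
      using True B by (intro prod.cong refl) (simp add: pmf_Pi)
    also have "\<dots> = pmf (Pi_pmf A (\<lambda>_. dflt) (\<lambda>_. Pi_pmf B dflt (\<lambda>_. D))) g"
      using True A by (simp add: pmf_Pi fun_eq_iff)
    finally show ?thesis .
  next
    case False
    then obtain x y where xy: "(x, y) \<notin> A \<times> B" "g x y \<noteq> dflt" by auto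
    have "pmf (Pi_pmf A (\<lambda>_. dflt) (\<lambda>_. Pi_pmf B dflt (\<lambda>_. D))) g = 0"
    proof (cases "x \<in> A")
      case True
      hence "pmf (Pi_pmf B dflt (\<lambda>_. D)) (g x) = 0" using xy B by (intro pmf_Pi_outside) auto
      thus ?thesis using True A by (auto simp: pmf_Pi)
    next
      case False
      thus ?thesis using xy A by (intro pmf_Pi_outside) (auto simp: fun_eq_iff)
    qed
    moreover have "pmf (Pi_pmf (A \<times> B) dflt (\<lambda>_. D)) (case_prod g) = 0"
      using xy A B by (intro pmf_Pi_outside) auto
    ultimately show ?thesis by simp
  qed
  finally show "pmf (map_pmf curry (Pi_pmf (A \<times> B) dflt (\<lambda>_. D))) g =
                pmf (Pi_pmf A (\<lambda>_. dflt) (\<lambda>_. Pi_pmf B dflt (\<lambda>_. D))) g" .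
qed

definition rows :: "('a \<times> 'b \<Rightarrow> 'c) \<times> ('a \<Rightarrow> 'd) \<Rightarrow> 'a \<Rightarrow> ('b \<Rightarrow> 'c) \<times> 'd" where
  "rows = (\<lambda>(X, Y) t. ((\<lambda>j. X (t, j)), Y t))"

lemma map_rows_Pi_pmf:
  fixes h :: "('b \<Rightarrow> bool) \<Rightarrow> bool pmf"
  assumes A: "finite A" and B: "finite B"
  shows "map_pmf rows
           (do {X \<leftarrow> Pi_pmf (A \<times> B) False (\<lambda>_. D);
                Y \<leftarrow> Pi_pmf A False (\<lambda>t. h (\<lambda>j. X (t, j)));
                return_pmf (X, Y)})
       = Pi_pmf A ((\<lambda>_. False), False)
           (\<lambda>_. do {x \<leftarrow> Pi_pmf B False (\<lambda>_. D); y \<leftarrow> h x; return_pmf (x, y)})"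
    (is "?L = ?R")
proof -
  define PA where "PA = Pi_pmf A (\<lambda>_. False) (\<lambda>_. Pi_pmf B False (\<lambda>_. D))"
  have X: "Pi_pmf (A \<times> B) False (\<lambda>_. D) = map_pmf case_prod PA"
    unfolding PA_def Pi_pmf_curry[symmetric, OF A B] by (simp add: pmf.map_comp o_def)
  have "?L = do {F \<leftarrow> PA; map_pmf (\<lambda>Y t. (F t, Y t)) (Pi_pmf A False (\<lambda>t. h (F t)))}"
    by (simp add: X map_bind_pmf bind_map_pmf rows_def map_pmf_def[symmetric] pmf.map_comp o_def)
  also have "\<dots> = do {F \<leftarrow> PA; Pi_pmf A ((\<lambda>_. False), False) (\<lambda>t. map_pmf (Pair (F t)) (h (F t)))}"
  proof (rule bind_pmf_cong[OF refl])
    fix F assume F: "F \<in> set_pmf PA"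
    have "F t = (\<lambda>_. False)" if "t \<notin> A" for t
      using F set_Pi_pmf_subset[OF A, of "\<lambda>_. False" "\<lambda>_. Pi_pmf B False (\<lambda>_. D)"] that
      unfolding PA_def by blast
    moreover have "Y t = False" if "Y \<in> set_pmf (Pi_pmf A False (\<lambda>t. h (F t)))" "t \<notin> A" for Y t
      using set_Pi_pmf_subset[OF A, of False "\<lambda>t. h (F t)"] that by blast
    ultimately show "map_pmf (\<lambda>Y t. (F t, Y t)) (Pi_pmf A False (\<lambda>t. h (F t))) =
                     Pi_pmf A ((\<lambda>_. False), False) (\<lambda>t. map_pmf (Pair (F t)) (h (F t)))"
      unfolding Pi_pmf_map_dependent[OF A, where dflt = False]
      by (intro map_pmf_cong refl) (auto simp: fun_eq_iff)
  qed
  also have "\<dots> = ?R"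
    unfolding PA_def map_pmf_def by (rule Pi_pmf_bind[OF A, symmetric])
  finally show ?thesis .
qed

section \<open>Counting patterns in i.i.d. sequences\<close>

lemma prod_if_subset:
  fixes a :: "'b :: comm_monoid_mult"
  assumes "finite A" "T \<subseteq> A"
  shows "(\<Prod>t\<in>A. if t \<in> T then a else g t) = a ^ card T * (\<Prod>t\<in>A - T. g t)"
proof -
  have "A \<inter> {t. t \<in> T} = T" "A \<inter> - {t. t \<in> T} = A - T" using assms(2) by auto
  thus ?thesis using prod.If_cases[OF assms(1), of "\<lambda>t. t \<in> T" "\<lambda>_. a" g] by simp
qed

lemma measure_Pi_pmf_Pi_if:
  assumes "finite A" "T \<subseteq> A"
  shows "measure_pmf.prob (Pi_pmf A dflt (\<lambda>_. L)) (Pi A (\<lambda>t. if t \<in> T then C else D t)) =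
         measure_pmf.prob L C ^ card T * (\<Prod>t\<in>A - T. measure_pmf.prob L (D t))"
proof -
  have "measure_pmf.prob (Pi_pmf A dflt (\<lambda>_. L)) (Pi A (\<lambda>t. if t \<in> T then C else D t)) =
        (\<Prod>t\<in>A. if t \<in> T then measure_pmf.prob L C else measure_pmf.prob L (D t))"
    by (subst measure_Pi_pmf_Pi[OF assms(1)]) (simp add: if_distrib)
  thus ?thesis using prod_if_subset[OF assms] by simp
qed

lemma measure_Pi_pmf_Pi_if_if:
  assumes "finite A" "T \<subseteq> A" "T' \<subseteq> A - T"
  shows "measure_pmf.prob (Pi_pmf A dflt (\<lambda>_. L)) (Pi A (\<lambda>t. if t \<in> T then C else if t \<in> T' then C' else R)) =
         measure_pmf.prob L C ^ card T * measure_pmf.prob L C' ^ card T' *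
         measure_pmf.prob L R ^ (card A - card T - card T')"
proof -
  have "(\<Prod>t\<in>A - T. measure_pmf.prob L (if t \<in> T' then C' else R)) =
        (\<Prod>t\<in>A - T. if t \<in> T' then measure_pmf.prob L C' else measure_pmf.prob L R)"
    by (intro prod.cong) auto
  also have "\<dots> = measure_pmf.prob L C' ^ card T' * measure_pmf.prob L R ^ (card A - card T - card T')"
    using prod_if_subset[OF _ assms(3), of "measure_pmf.prob L C'" "\<lambda>_. measure_pmf.prob L R"] assms
    by (simp add: card_Diff_subset finite_subset)
  finally show ?thesis
    using measure_Pi_pmf_Pi_if[OF assms(1,2), of dflt L C "\<lambda>t. if t \<in> T' then C' else R"] by (simp add: mult.assoc)
qed

definition hits_pattern :: "'a set \<Rightarrow> 'b set \<Rightarrow> 'b set \<Rightarrow> nat \<Rightarrow> ('a \<Rightarrow> 'b) set" where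
  "hits_pattern A C Z m = {f. card {t \<in> A. f t \<in> C} = m \<and> (\<forall>t\<in>A. f t \<notin> Z)}"

lemma mem_Pi_if_iff:
  assumes "T \<subseteq> A" "C \<inter> Z = {}"
  shows "f \<in> Pi A (\<lambda>t. if t \<in> T then C else - (C \<union> Z)) \<longleftrightarrow> {t \<in> A. f t \<in> C} = T \<and> (\<forall>t\<in>A. f t \<notin> Z)"
proof
  assume "f \<in> Pi A (\<lambda>t. if t \<in> T then C else - (C \<union> Z))"
  from Pi_mem[OF this] show "{t \<in> A. f t \<in> C} = T \<and> (\<forall>t\<in>A. f t \<notin> Z)"
    using assms by (fastforce split: if_splits)
qed auto

lemma hits_pattern_eq_UN:
  assumes "C \<inter> Z = {}"
  shows "hits_pattern A C Z m = (\<Union>T\<in>{T. T \<subseteq> A \<and> card T = m}. Pi A (\<lambda>t. if t \<in> T then C else - (C \<union> Z)))"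
proof (intro equalityI subsetI)
  fix f assume f: "f \<in> hits_pattern A C Z m"
  define T where "T = {t \<in> A. f t \<in> C}"
  have T: "T \<subseteq> A" "card T = m" using f unfolding T_def hits_pattern_def by auto
  hence "f \<in> Pi A (\<lambda>t. if t \<in> T then C else - (C \<union> Z))"
    using f mem_Pi_if_iff[OF T(1) assms, of f] unfolding T_def hits_pattern_def by simp
  thus "f \<in> (\<Union>T\<in>{T. T \<subseteq> A \<and> card T = m}. Pi A (\<lambda>t. if t \<in> T then C else - (C \<union> Z)))"
    using T by (intro UN_I[of T]) simp_all
next
  fix f assume "f \<in> (\<Union>T\<in>{T. T \<subseteq> A \<and> card T = m}. Pi A (\<lambda>t. if t \<in> T then C else - (C \<union> Z)))"
  then obtain T where "T \<subseteq> A" "card T = m" "f \<in> Pi A (\<lambda>t. if t \<in> T then C else - (C \<union> Z))" by auto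
  thus "f \<in> hits_pattern A C Z m" using mem_Pi_if_iff[OF _ assms, of T A f] unfolding hits_pattern_def by simp
qed

lemma measure_Pi_pmf_hits_pattern:
  assumes A: "finite A" and CZ: "C \<inter> Z = {}"
  shows "measure_pmf.prob (Pi_pmf A dflt (\<lambda>_. L)) (hits_pattern A C Z m) =
         real (card A choose m) * measure_pmf.prob L C ^ m * measure_pmf.prob L (- (C \<union> Z)) ^ (card A - m)"
proof -
  define TT where "TT = {T. T \<subseteq> A \<and> card T = m}"
  define E where "E T = Pi A (\<lambda>t. if t \<in> T then C else - (C \<union> Z))" for T
  have "disjoint_family_on E TT"
    unfolding disjoint_family_on_def
  proof (intro ballI impI)
    fix T T' assume T: "T \<in> TT" "T' \<in> TT" "T \<noteq> T'"
    have "T = T'" if "f \<in> E T" "f \<in> E T'" for f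
      using that mem_Pi_if_iff[OF _ CZ, of T A f] mem_Pi_if_iff[OF _ CZ, of T' A f] T unfolding TT_def E_def by simp
    thus "E T \<inter> E T' = {}" using T(3) by blast
  qed
  hence "measure_pmf.prob (Pi_pmf A dflt (\<lambda>_. L)) (\<Union>T\<in>TT. E T) =
         (\<Sum>T\<in>TT. measure_pmf.prob (Pi_pmf A dflt (\<lambda>_. L)) (E T))"
    using A unfolding TT_def by (intro measure_pmf.finite_measure_finite_Union) auto
  also have "\<dots> = (\<Sum>T\<in>TT. measure_pmf.prob L C ^ m * measure_pmf.prob L (- (C \<union> Z)) ^ (card A - m))"
  proof (intro sum.cong refl)
    fix T assume "T \<in> TT"
    hence "T \<subseteq> A" "card T = m" unfolding TT_def by auto
    thus "measure_pmf.prob (Pi_pmf A dflt (\<lambda>_. L)) (E T) =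
          measure_pmf.prob L C ^ m * measure_pmf.prob L (- (C \<union> Z)) ^ (card A - m)"
      unfolding E_def using A by (simp add: measure_Pi_pmf_Pi_if card_Diff_subset finite_subset)
  qed
  also have "\<dots> = real (card TT) * (measure_pmf.prob L C ^ m * measure_pmf.prob L (- (C \<union> Z)) ^ (card A - m))"
    by simp
  also have "card TT = card A choose m" unfolding TT_def by (rule n_subsets[OF A])
  finally show ?thesis unfolding hits_pattern_eq_UN[OF CZ] TT_def E_def by simp
qed

lemma measure_Pi_pmf_hits_pattern_Int_le:
  assumes A: "finite A" and disj: "(C \<union> Z) \<inter> (C' \<union> Z') = {}"
  shows "measure_pmf.prob (Pi_pmf A dflt (\<lambda>_. L)) (hits_pattern A C Z m \<inter> hits_pattern A C' Z' m) \<le>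
         real (card A choose m) ^ 2 * measure_pmf.prob L C ^ m * measure_pmf.prob L C' ^ m *
         measure_pmf.prob L (- (C \<union> Z \<union> C' \<union> Z')) ^ (card A - 2 * m)"
proof -
  define R where "R = - (C \<union> Z \<union> C' \<union> Z')"
  define TT where "TT = {T. T \<subseteq> A \<and> card T = m}"
  define PP where "PP = {(T, T') \<in> TT \<times> TT. T \<inter> T' = {}}"
  define E where "E = (\<lambda>(T, T'). Pi A (\<lambda>t. if t \<in> T then C else if t \<in> T' then C' else R))"
  define K where "K = measure_pmf.prob L C ^ m * measure_pmf.prob L C' ^ m * measure_pmf.prob L R ^ (card A - 2 * m)"
  have finTT: "finite TT" unfolding TT_def using A by simp
  have PP_sub: "PP \<subseteq> TT \<times> TT" unfolding PP_def by auto
  have "hits_pattern A C Z m \<inter> hits_pattern A C' Z' m \<subseteq> (\<Union>P\<in>PP. E P)"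
  proof
    fix f assume "f \<in> hits_pattern A C Z m \<inter> hits_pattern A C' Z' m"
    hence "({t \<in> A. f t \<in> C}, {t \<in> A. f t \<in> C'}) \<in> PP" "f \<in> E ({t \<in> A. f t \<in> C}, {t \<in> A. f t \<in> C'})"
      using disj unfolding hits_pattern_def PP_def TT_def E_def R_def by auto
    thus "f \<in> (\<Union>P\<in>PP. E P)" by blast
  qed
  hence "measure_pmf.prob (Pi_pmf A dflt (\<lambda>_. L)) (hits_pattern A C Z m \<inter> hits_pattern A C' Z' m) \<le>
         measure_pmf.prob (Pi_pmf A dflt (\<lambda>_. L)) (\<Union>P\<in>PP. E P)"
    by (intro measure_pmf.finite_measure_mono) auto
  also have "\<dots> \<le> (\<Sum>P\<in>PP. measure_pmf.prob (Pi_pmf A dflt (\<lambda>_. L)) (E P))"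
    using finite_subset[OF PP_sub] finTT by (intro measure_pmf.finite_measure_subadditive_finite) auto
  also have "\<dots> = (\<Sum>P\<in>PP. K)"
  proof (intro sum.cong refl)
    fix P assume "P \<in> PP"
    then obtain T T' where "P = (T, T')" "T \<subseteq> A" "T' \<subseteq> A" "T \<inter> T' = {}" "card T = m" "card T' = m"
      unfolding PP_def TT_def by auto
    moreover from this have "T' \<subseteq> A - T" by blast
    ultimately show "measure_pmf.prob (Pi_pmf A dflt (\<lambda>_. L)) (E P) = K"
      using measure_Pi_pmf_Pi_if_if[OF A, of T T' dflt L C C' R] unfolding E_def K_def by (simp add: mult_2)
  qed
  also have "\<dots> = real (card PP) * K" by simp
  also have "\<dots> \<le> real (card (TT \<times> TT)) * K"
  proof (rule mult_right_mono)
    show "real (card PP) \<le> real (card (TT \<times> TT))"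
      using finTT PP_sub by (simp only: of_nat_le_iff) (intro card_mono, auto)
  qed (simp add: K_def)
  also have "card (TT \<times> TT) = (card A choose m) ^ 2"
    unfolding card_cartesian_product TT_def n_subsets[OF A] by (simp add: power2_eq_square)
  finally show ?thesis unfolding K_def R_def by (simp add: mult.assoc)
qed

section \<open>The second moment method\<close>

lemma integrable_measure_pmf_bounded:
  fixes f :: "'a \<Rightarrow> real"
  assumes "\<And>x. \<bar>f x\<bar> \<le> B"
  shows "integrable (measure_pmf M) f"
  by (rule measure_pmf.integrable_const_bound[where B = B]) (use assms in auto)

lemma prob_none_second_moment:
  fixes M :: "'a pmf" and G :: "'i \<Rightarrow> 'a set"
  assumes I: "finite I"
  defines "\<mu> \<equiv> \<Sum>i\<in>I. measure_pmf.prob M (G i)"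
  shows "measure_pmf.prob M {x. \<forall>i\<in>I. x \<notin> G i} * \<mu>\<^sup>2 \<le>
         (\<Sum>i\<in>I. \<Sum>j\<in>I. measure_pmf.prob M (G i \<inter> G j)) - \<mu>\<^sup>2"
proof -
  define Z where "Z x = (\<Sum>i\<in>I. indicator (G i) x :: real)" for x
  have Z_bound: "\<bar>Z x\<bar> \<le> real (card I)" for x
  proof -
    have "0 \<le> Z x" unfolding Z_def by (simp add: sum_nonneg)
    moreover have "Z x \<le> (\<Sum>i\<in>I. 1)" unfolding Z_def by (rule sum_mono) (simp add: indicator_def)
    ultimately show ?thesis by simp
  qed
  have ind: "integrable (measure_pmf M) (indicator X :: 'a \<Rightarrow> real)" for X
    by (rule integrable_measure_pmf_bounded[where B = 1]) (simp add: indicator_def)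
  have Z: "integrable (measure_pmf M) Z" "integrable (measure_pmf M) (\<lambda>x. (Z x)\<^sup>2)"
    using Z_bound abs_le_square_iff[of "Z _" "real (card I)"]
    by (auto intro!: integrable_measure_pmf_bounded simp: power2_abs)
  have EZ: "measure_pmf.expectation M Z = \<mu>"
    unfolding Z_def \<mu>_def by (simp add: Bochner_Integration.integral_sum ind)
  have "(Z x)\<^sup>2 = (\<Sum>i\<in>I. \<Sum>j\<in>I. indicator (G i \<inter> G j) x)" for x
    unfolding Z_def power2_eq_square sum_product by (intro sum.cong refl) (auto simp: indicator_def)
  hence EZ2: "measure_pmf.expectation M (\<lambda>x. (Z x)\<^sup>2) = (\<Sum>i\<in>I. \<Sum>j\<in>I. measure_pmf.prob M (G i \<inter> G j))"
    by (simp add: Bochner_Integration.integral_sum ind Bochner_Integration.integrable_sum)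
  define E0 where "E0 = {x. \<forall>i\<in>I. x \<notin> G i}"
  \<comment> \<open>Chebyshev: on \<open>E0\<close> the count \<open>Z\<close> vanishes, so it deviates from its mean by \<open>\<mu>\<close>.\<close>
  have pointwise: "\<mu>\<^sup>2 * indicator E0 x \<le> (Z x - \<mu>)\<^sup>2" for x
    by (cases "x \<in> E0") (simp_all add: Z_def E0_def)
  have expand: "(\<lambda>x. (Z x - \<mu>)\<^sup>2) = (\<lambda>x. (Z x)\<^sup>2 - 2 * \<mu> * Z x + \<mu>\<^sup>2)"
    by (simp add: power2_diff algebra_simps)
  have int_expand: "integrable (measure_pmf M) (\<lambda>x. (Z x)\<^sup>2 - 2 * \<mu> * Z x + \<mu>\<^sup>2)"
    using Z by simp
  have "\<mu>\<^sup>2 * measure_pmf.prob M E0 = measure_pmf.expectation M (\<lambda>x. \<mu>\<^sup>2 * indicator E0 x)"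
    by simp
  also have "\<dots> \<le> measure_pmf.expectation M (\<lambda>x. (Z x - \<mu>)\<^sup>2)"
    using ind int_expand[folded expand] pointwise by (intro integral_mono) simp_all
  also have "\<dots> = measure_pmf.expectation M (\<lambda>x. (Z x)\<^sup>2) - 2 * \<mu> * measure_pmf.expectation M Z + \<mu>\<^sup>2"
    using Z unfolding expand by simp
  finally show ?thesis unfolding E0_def[symmetric] EZ EZ2 by (simp add: power2_eq_square mult.commute)
qed

lemma prob_none_le_pairwise:
  fixes M :: "'a pmf" and G :: "'i \<Rightarrow> 'a set"
  assumes I: "finite I" "I \<noteq> {}" and P: "0 < P" "\<And>i. i \<in> I \<Longrightarrow> measure_pmf.prob M (G i) = P"
    and B: "0 \<le> B" "\<And>i j. i \<in> I \<Longrightarrow> j \<in> I \<Longrightarrow> i \<noteq> j \<Longrightarrow> measure_pmf.prob M (G i \<inter> G j) \<le> B"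
  shows "measure_pmf.prob M {x. \<forall>i\<in>I. x \<notin> G i} \<le> 1 / (real (card I) * P) + B / P\<^sup>2 - 1"
proof -
  define k where "k = real (card I)"
  have k: "k > 0" unfolding k_def using I by (simp add: card_gt_0_iff)
  have row: "(\<Sum>j\<in>I. measure_pmf.prob M (G i \<inter> G j)) \<le> P + k * B" if "i \<in> I" for i
  proof -
    have "(\<Sum>j\<in>I. measure_pmf.prob M (G i \<inter> G j)) =
          measure_pmf.prob M (G i) + (\<Sum>j\<in>I - {i}. measure_pmf.prob M (G i \<inter> G j))"
      using that I by (simp add: sum.remove)
    also have "\<dots> \<le> P + (\<Sum>j\<in>I - {i}. B)"
      using P(2)[OF that] B(2)[OF that] by (intro add_mono sum_mono) auto
    also have "\<dots> \<le> P + k * B"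
      using that I B unfolding k_def by (intro add_left_mono) (simp add: card_Diff_singleton mult_right_mono)
    finally show ?thesis .
  qed
  have "(\<Sum>i\<in>I. \<Sum>j\<in>I. measure_pmf.prob M (G i \<inter> G j)) \<le> (\<Sum>i\<in>I. P + k * B)"
    using row by (rule sum_mono)
  also have "\<dots> = k * P + k\<^sup>2 * B" unfolding k_def by (simp add: power2_eq_square algebra_simps)
  finally have "measure_pmf.prob M {x. \<forall>i\<in>I. x \<notin> G i} * (k * P)\<^sup>2 \<le> k * P + k\<^sup>2 * B - (k * P)\<^sup>2"
    using prob_none_second_moment[OF I(1), of M G] P(2) unfolding k_def by simp
  hence "measure_pmf.prob M {x. \<forall>i\<in>I. x \<notin> G i} \<le> (k * P + k\<^sup>2 * B - (k * P)\<^sup>2) / (k * P)\<^sup>2"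
    using k P by (simp add: pos_le_divide_eq)
  also have "\<dots> = 1 / (k * P) + B / P\<^sup>2 - 1"
    using k P by (simp add: field_simps power2_eq_square)
  finally show ?thesis unfolding k_def .
qed

section \<open>Tests isolating a defective item\<close>

definition isolation_prob :: "real \<Rightarrow> nat \<Rightarrow> real" where
  "isolation_prob q k = q * (1 - q) ^ (k - 1)"

definition isolates :: "nat set \<Rightarrow> nat \<Rightarrow> (nat \<Rightarrow> bool) \<Rightarrow> bool" where
  "isolates S i x \<longleftrightarrow> x i \<and> (\<forall>j\<in>S - {i}. \<not> x j)"

definition row_pmf :: "nat \<Rightarrow> nat set \<Rightarrow> real \<Rightarrow> real \<Rightarrow> ((nat \<Rightarrow> bool) \<times> bool) pmf" where
  "row_pmf p S q \<rho> =
     do {x \<leftarrow> Pi_pmf {1..p} False (\<lambda>_. bernoulli_pmf q);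
         y \<leftarrow> (if \<exists>j\<in>S. x j then bernoulli_pmf (1 - \<rho>) else return_pmf False);
         return_pmf (x, y)}"

definition isolating_test :: "nat set \<Rightarrow> nat \<Rightarrow> bool \<Rightarrow> ((nat \<Rightarrow> bool) \<times> bool) set" where
  "isolating_test S i b = {(x, y). isolates S i x \<and> y = b}"

lemma isolating_test_disjoint: "isolating_test S i False \<inter> isolating_test S i True = {}"
  by (auto simp: isolating_test_def)

lemma isolating_tests_disjoint:
  "i \<noteq> j \<Longrightarrow> i \<in> S \<Longrightarrow> j \<in> S \<Longrightarrow>
   (isolating_test S i False \<union> isolating_test S i True) \<inter>
   (isolating_test S j False \<union> isolating_test S j True) = {}"
  by (auto simp: isolating_test_def isolates_def)

lemma measure_isolates:
  assumes S: "S \<subseteq> {1..p}" "i \<in> S" and q: "0 \<le> q" "q \<le> 1"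
  shows "measure_pmf.prob (Pi_pmf {1..p} False (\<lambda>_. bernoulli_pmf q)) {x. isolates S i x} =
         isolation_prob q (card S)"
proof -
  define D where "D j = (if j \<in> S then {False} else UNIV)" for j
  have "{x. isolates S i x} = Pi {1..p} (\<lambda>j. if j \<in> {i} then {True} else D j)"
    using S unfolding isolates_def Pi_def D_def by auto
  hence "measure_pmf.prob (Pi_pmf {1..p} False (\<lambda>_. bernoulli_pmf q)) {x. isolates S i x} =
         measure_pmf.prob (bernoulli_pmf q) {True} * (\<Prod>j\<in>{1..p} - {i}. measure_pmf.prob (bernoulli_pmf q) (D j))"
    using S measure_Pi_pmf_Pi_if[of "{1..p}" "{i}" False "bernoulli_pmf q" "{True}" D] by auto
  also have "\<dots> = q * (\<Prod>j\<in>{1..p} - {i}. if j \<in> S - {i} then 1 - q else 1)"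
    using q by (intro arg_cong2[where f = "(*)"] prod.cong) (auto simp: D_def measure_pmf_single)
  also have "\<dots> = q * (1 - q) ^ (card S - 1)"
    using S prod_if_subset[of "{1..p} - {i}" "S - {i}" "1 - q" "\<lambda>_. 1"]
    by (auto simp: card_Diff_singleton finite_subset)
  finally show ?thesis unfolding isolation_prob_def .
qed

lemma measure_row_pmf_fst:
  "measure_pmf.prob (row_pmf p S q \<rho>) (fst -` B) =
   measure_pmf.prob (Pi_pmf {1..p} False (\<lambda>_. bernoulli_pmf q)) B"
proof -
  have "map_pmf fst (row_pmf p S q \<rho>) = Pi_pmf {1..p} False (\<lambda>_. bernoulli_pmf q)"
    unfolding row_pmf_def map_bind_pmf
    by (simp add: map_pmf_def[symmetric] pmf.map_comp o_def map_pmf_const bind_return_pmf')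
  thus ?thesis by (metis measure_map_pmf)
qed

lemma measure_row_pmf_isolating_negative:
  assumes S: "S \<subseteq> {1..p}" "i \<in> S" and q: "0 \<le> q" "q \<le> 1" and \<rho>: "0 \<le> \<rho>" "\<rho> \<le> 1"
  shows "measure_pmf.prob (row_pmf p S q \<rho>) (isolating_test S i False) = \<rho> * isolation_prob q (card S)"
proof -
  let ?X = "Pi_pmf {1..p} False (\<lambda>_. bernoulli_pmf q)"
  have outcome: "measure_pmf.prob
      (map_pmf (Pair x) (if \<exists>j\<in>S. x j then bernoulli_pmf (1 - \<rho>) else return_pmf False))
      (isolating_test S i False) = \<rho> * indicator {x. isolates S i x} x" for x
  proof (cases "isolates S i x")
    case True
    hence "\<exists>j\<in>S. x j" "Pair x -` isolating_test S i False = {False}"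
      using S by (auto simp: isolates_def isolating_test_def)
    thus ?thesis using True \<rho> by (simp add: measure_pmf_single)
  next
    case False
    hence "Pair x -` isolating_test S i False = {}" by (auto simp: isolating_test_def)
    thus ?thesis using False by simp
  qed
  have "measure_pmf.prob (row_pmf p S q \<rho>) (isolating_test S i False) =
        measure_pmf.expectation ?X (\<lambda>x. \<rho> * indicator {x. isolates S i x} x)"
    unfolding row_pmf_def by (subst measure_bind_pmf) (simp only: map_pmf_def[symmetric] outcome)
  also have "\<dots> = \<rho> * isolation_prob q (card S)" using measure_isolates[OF S q] by simp
  finally show ?thesis .
qed

lemma measure_row_pmf_not_isolating:
  assumes S: "S \<subseteq> {1..p}" "i \<in> S" and q: "0 \<le> q" "q \<le> 1"
  shows "measure_pmf.prob (row_pmf p S q \<rho>) (- (isolating_test S i False \<union> isolating_test S i True)) =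
         1 - isolation_prob q (card S)"
proof -
  have "- (isolating_test S i False \<union> isolating_test S i True) = fst -` (- {x. isolates S i x})"
    by (auto simp: isolating_test_def)
  thus ?thesis
    using measure_pmf.prob_compl[of "{x. isolates S i x}"] measure_isolates[OF S q]
    by (simp add: measure_row_pmf_fst Compl_eq_Diff_UNIV)
qed

lemma measure_row_pmf_not_isolating_pair:
  assumes S: "S \<subseteq> {1..p}" "i \<in> S" "j \<in> S" "i \<noteq> j" and q: "0 \<le> q" "q \<le> 1"
  shows "measure_pmf.prob (row_pmf p S q \<rho>)
           (- (isolating_test S i False \<union> isolating_test S i True \<union>
               isolating_test S j False \<union> isolating_test S j True)) =
         1 - 2 * isolation_prob q (card S)"
proof -
  let ?X = "Pi_pmf {1..p} False (\<lambda>_. bernoulli_pmf q)"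
  have "- (isolating_test S i False \<union> isolating_test S i True \<union>
           isolating_test S j False \<union> isolating_test S j True) =
        fst -` (- ({x. isolates S i x} \<union> {x. isolates S j x}))"
    by (auto simp: isolating_test_def)
  moreover have "measure_pmf.prob ?X ({x. isolates S i x} \<union> {x. isolates S j x}) =
                 measure_pmf.prob ?X {x. isolates S i x} + measure_pmf.prob ?X {x. isolates S j x}"
    using S by (intro measure_pmf.finite_measure_Union) (auto simp: isolates_def)
  ultimately show ?thesis
    using measure_pmf.prob_compl[of "{x. isolates S i x} \<union> {x. isolates S j x}" ?X]
          measure_isolates[OF S(1,2) q] measure_isolates[OF S(1,3) q]
    by (simp add: measure_row_pmf_fst Compl_eq_Diff_UNIV)
qed

definition test_pmf :: "nat \<Rightarrow> nat \<Rightarrow> nat set \<Rightarrow> real \<Rightarrow> real \<Rightarrow> ((nat \<times> nat \<Rightarrow> bool) \<times> (nat \<Rightarrow> bool)) pmf" where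
  "test_pmf p n S q \<rho> =
     do {X \<leftarrow> Pi_pmf ({0..<n} \<times> {1..p}) False (\<lambda>_. bernoulli_pmf q);
         Y \<leftarrow> Pi_pmf {0..<n} False (\<lambda>t. if \<exists>j\<in>S. X (t, j) then bernoulli_pmf (1 - \<rho>) else return_pmf False);
         return_pmf (X, Y)}"

lemma map_rows_test_pmf:
  "map_pmf rows (test_pmf p n S q \<rho>) = Pi_pmf {0..<n} ((\<lambda>_. False), False) (\<lambda>_. row_pmf p S q \<rho>)"
  unfolding test_pmf_def row_pmf_def by (rule map_rows_Pi_pmf) simp_all

definition isolation_pattern :: "nat \<Rightarrow> nat set \<Rightarrow> nat \<Rightarrow> nat \<Rightarrow> (nat \<Rightarrow> (nat \<Rightarrow> bool) \<times> bool) set" where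
  "isolation_pattern n S m i = hits_pattern {0..<n} (isolating_test S i False) (isolating_test S i True) m"

lemma isolated_counts_conv_rows:
  "{(X, Y). \<exists>i\<in>S. Mplus n S X Y i = 0 \<and> Mminus n S X Y i = m} =
   rows -` {f. \<exists>i\<in>S. f \<in> isolation_pattern n S m i}"
proof -
  have "Mminus n S X Y i = card {t \<in> {0..<n}. rows (X, Y) t \<in> isolating_test S i False}"
       "Mplus n S X Y i = 0 \<longleftrightarrow> (\<forall>t\<in>{0..<n}. rows (X, Y) t \<notin> isolating_test S i True)" for X Y i
    unfolding Mminus_def Mplus_def rows_def isolating_test_def isolates_def by (auto intro: arg_cong[where f = card])
  thus ?thesis unfolding isolation_pattern_def hits_pattern_def by auto
qed

definition pattern_prob :: "nat \<Rightarrow> nat \<Rightarrow> real \<Rightarrow> real \<Rightarrow> real" where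
  "pattern_prob n m r \<rho> = real (n choose m) * (r * \<rho>) ^ m * (1 - r) ^ (n - m)"

lemma pair_pattern_prob_le:
  assumes r: "0 \<le> r" "r \<le> 1/2" and nm: "2 * m \<le> n"
  shows "real (n choose m) ^ 2 * (r * \<rho>) ^ (2 * m) * (1 - 2 * r) ^ (n - 2 * m) \<le>
         pattern_prob n m r \<rho> ^ 2 / (1 - r) ^ (2 * m)"
proof -
  have "(1 - 2 * r) ^ (n - 2 * m) \<le> ((1 - r)\<^sup>2) ^ (n - 2 * m)"
    using r by (intro power_mono) (auto simp: power2_eq_square algebra_simps)
  also have "\<dots> * (1 - r) ^ (2 * m) = ((1 - r) ^ (n - m))\<^sup>2"
  proof -
    have "2 * (n - 2 * m) + 2 * m = 2 * (n - m)" using nm by simp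
    thus ?thesis by (metis power_add power_mult power_mult_distrib mult.commute)
  qed
  finally have "(1 - 2 * r) ^ (n - 2 * m) * (1 - r) ^ (2 * m) \<le> ((1 - r) ^ (n - m))\<^sup>2"
    using r by (simp add: mult_right_mono)
  hence "(real (n choose m) * (r * \<rho>) ^ m)\<^sup>2 * ((1 - 2 * r) ^ (n - 2 * m) * (1 - r) ^ (2 * m)) \<le>
         (real (n choose m) * (r * \<rho>) ^ m)\<^sup>2 * ((1 - r) ^ (n - m))\<^sup>2"
    by (intro mult_left_mono) simp_all
  hence "real (n choose m) ^ 2 * (r * \<rho>) ^ (2 * m) * (1 - 2 * r) ^ (n - 2 * m) * (1 - r) ^ (2 * m) \<le>
         pattern_prob n m r \<rho> ^ 2"
    unfolding pattern_prob_def by (simp add: power_mult_distrib power_mult mult_ac)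
  moreover have "(1 - r) ^ (2 * m) > 0" using r by simp
  ultimately show ?thesis by (simp only: pos_le_divide_eq)
qed

lemma measure_isolation_pattern:
  assumes S: "S \<subseteq> {1..p}" "i \<in> S" and q: "0 \<le> q" "q \<le> 1" and \<rho>: "0 \<le> \<rho>" "\<rho> \<le> 1"
  shows "measure_pmf.prob (Pi_pmf {0..<n} dflt (\<lambda>_. row_pmf p S q \<rho>)) (isolation_pattern n S m i) =
         pattern_prob n m (isolation_prob q (card S)) \<rho>"
  unfolding isolation_pattern_def pattern_prob_def
  using measure_Pi_pmf_hits_pattern[of "{0..<n}", OF _ isolating_test_disjoint, of dflt "row_pmf p S q \<rho>"]
        measure_row_pmf_isolating_negative[OF S q \<rho>] measure_row_pmf_not_isolating[OF S q]
  by (simp add: mult.commute)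

lemma measure_isolation_pattern_Int_le:
  assumes S: "S \<subseteq> {1..p}" "i \<in> S" "j \<in> S" "i \<noteq> j" and q: "0 \<le> q" "q \<le> 1" and \<rho>: "0 \<le> \<rho>" "\<rho> \<le> 1"
    and r_le: "isolation_prob q (card S) \<le> 1/2" and nm: "2 * m \<le> n"
  defines "r \<equiv> isolation_prob q (card S)"
  shows "measure_pmf.prob (Pi_pmf {0..<n} dflt (\<lambda>_. row_pmf p S q \<rho>))
           (isolation_pattern n S m i \<inter> isolation_pattern n S m j) \<le>
         pattern_prob n m r \<rho> ^ 2 / (1 - r) ^ (2 * m)"
proof -
  have "measure_pmf.prob (Pi_pmf {0..<n} dflt (\<lambda>_. row_pmf p S q \<rho>))
          (isolation_pattern n S m i \<inter> isolation_pattern n S m j) \<le>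
        real (n choose m) ^ 2 * (r * \<rho>) ^ m * (r * \<rho>) ^ m * (1 - 2 * r) ^ (n - 2 * m)"
    unfolding isolation_pattern_def r_def
    using measure_Pi_pmf_hits_pattern_Int_le[of "{0..<n}", OF _ isolating_tests_disjoint[OF S(4,2,3)],
            of dflt "row_pmf p S q \<rho>"]
          measure_row_pmf_isolating_negative[OF S(1,2) q \<rho>] measure_row_pmf_isolating_negative[OF S(1,3) q \<rho>]
          measure_row_pmf_not_isolating_pair[OF S q]
    by (simp add: mult.commute)
  also have "\<dots> = real (n choose m) ^ 2 * (r * \<rho>) ^ (2 * m) * (1 - 2 * r) ^ (n - 2 * m)"
    by (simp only: mult_2 power_add mult.assoc)
  also have "\<dots> \<le> pattern_prob n m r \<rho> ^ 2 / (1 - r) ^ (2 * m)"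
    using q r_le unfolding r_def isolation_prob_def by (intro pair_pattern_prob_le nm) simp_all
  finally show ?thesis .
qed

lemma measure_test_pmf_isolated_negatives_ge:
  assumes S: "S \<subseteq> {1..p}" "S \<noteq> {}" and q: "0 \<le> q" "q \<le> 1" and \<rho>: "0 \<le> \<rho>" "\<rho> \<le> 1"
    and r_le: "isolation_prob q (card S) \<le> 1/2" and nm: "2 * m \<le> n"
    and P_pos: "pattern_prob n m (isolation_prob q (card S)) \<rho> > 0"
  defines "r \<equiv> isolation_prob q (card S)"
  defines "P \<equiv> pattern_prob n m r \<rho>"
  shows "measure_pmf.prob (test_pmf p n S q \<rho>) {(X, Y). \<exists>i\<in>S. Mplus n S X Y i = 0 \<and> Mminus n S X Y i = m}
         \<ge> 2 - 1 / (real (card S) * P) - 1 / (1 - r) ^ (2 * m)"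
proof -
  define W where "W = Pi_pmf {0..<n} ((\<lambda>_. False), False) (\<lambda>_. row_pmf p S q \<rho>)"
  have "finite S" using S(1) finite_subset by blast
  have "(1 - r) ^ (2 * m) > 0" using q r_le unfolding r_def isolation_prob_def by simp
  hence "P\<^sup>2 / (1 - r) ^ (2 * m) / P\<^sup>2 = 1 / (1 - r) ^ (2 * m)" using P_pos unfolding P_def r_def by simp
  hence "measure_pmf.prob W {f. \<forall>i\<in>S. f \<notin> isolation_pattern n S m i} \<le>
         1 / (real (card S) * P) + 1 / (1 - r) ^ (2 * m) - 1"
    using prob_none_le_pairwise[OF \<open>finite S\<close> S(2), of P W "isolation_pattern n S m" "P\<^sup>2 / (1 - r) ^ (2 * m)"]
          P_pos measure_isolation_pattern[OF S(1) _ q \<rho>] measure_isolation_pattern_Int_le[OF S(1) _ _ _ q \<rho> r_le nm]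
    unfolding W_def P_def r_def by simp
  moreover have "measure_pmf.prob (test_pmf p n S q \<rho>) {(X, Y). \<exists>i\<in>S. Mplus n S X Y i = 0 \<and> Mminus n S X Y i = m} =
                 1 - measure_pmf.prob W {f. \<forall>i\<in>S. f \<notin> isolation_pattern n S m i}"
    using measure_pmf.prob_compl[of "{f. \<exists>i\<in>S. f \<in> isolation_pattern n S m i}" W]
    unfolding isolated_counts_conv_rows W_def map_rows_test_pmf[symmetric]
    by (simp add: Compl_eq_Diff_UNIV set_diff_eq)
  ultimately show ?thesis by simp
qed

lemma measure_gt_pmf_ge:
  assumes kp: "k \<le> p" and dm: "d \<le> real m"
    and per_set: "\<And>S. S \<subseteq> {1..p} \<Longrightarrow> card S = k \<Longrightarrow>
       c \<le> measure_pmf.prob (test_pmf p n S (\<nu> / real k) \<rho>)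
              {(X, Y). \<exists>i\<in>S. Mplus n S X Y i = 0 \<and> Mminus n S X Y i = m}"
  shows "c \<le> measure_pmf.prob (gt_pmf p k n \<nu> \<rho>)
               {(S, X, Y). \<exists>i\<in>S. Mplus n S X Y i = 0 \<and> d \<le> real (Mminus n S X Y i)}"
proof -
  define SS where "SS = {S. S \<subseteq> {1..p} \<and> card S = k}"
  have "finite SS" unfolding SS_def by (rule finite_subset[of _ "Pow {1..p}"]) auto
  moreover have "{1..k} \<in> SS" unfolding SS_def using kp by auto
  ultimately have set_SS: "set_pmf (pmf_of_set SS) = SS" by (intro set_pmf_of_set) auto
  show ?thesis
    unfolding gt_pmf_def SS_def[symmetric]
  proof (rule measure_bind_pmf_ge)
    fix S assume "S \<in> set_pmf (pmf_of_set SS)"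
    hence S: "S \<subseteq> {1..p}" "card S = k" using set_SS unfolding SS_def by auto
    let ?E = "{(S, X, Y). \<exists>i\<in>S. Mplus n S X Y i = 0 \<and> d \<le> real (Mminus n S X Y i)}"
    have "c \<le> measure_pmf.prob (test_pmf p n S (\<nu> / real k) \<rho>)
                {(X, Y). \<exists>i\<in>S. Mplus n S X Y i = 0 \<and> Mminus n S X Y i = m}"
      by (rule per_set[OF S])
    also have "\<dots> \<le> measure_pmf.prob (test_pmf p n S (\<nu> / real k) \<rho>) ((\<lambda>(X, Y). (S, X, Y)) -` ?E)"
      using dm by (intro measure_pmf.finite_measure_mono) auto
    also have "\<dots> = measure_pmf.prob (map_pmf (\<lambda>(X, Y). (S, X, Y)) (test_pmf p n S (\<nu> / real k) \<rho>)) ?E"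
      by simp
    also have "map_pmf (\<lambda>(X, Y). (S, X, Y)) (test_pmf p n S (\<nu> / real k) \<rho>) =
               do {X \<leftarrow> Pi_pmf ({0..<n} \<times> {1..p}) False (\<lambda>_. bernoulli_pmf (\<nu> / real k));
                   Y \<leftarrow> Pi_pmf {0..<n} False
                          (\<lambda>t. if \<exists>j\<in>S. X (t, j) then bernoulli_pmf (1 - \<rho>) else return_pmf False);
                   return_pmf (S, X, Y)}"
      unfolding test_pmf_def by (simp add: map_bind_pmf)
    finally show "c \<le> measure_pmf.prob \<dots> ?E" .
  qed
qed

section \<open>Estimates for binomial coefficients\<close>

lemma exp_one_le_one_plus_inverse_pow:
  assumes "1 \<le> m"
  shows "exp 1 \<le> (1 + 1 / real m) ^ (m + 1)"
proof -
  define y where "y = 1 + 1 / real m"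
  have y: "y > 0" unfolding y_def by (simp add: add_pos_nonneg)
  have "ln (1 / y) \<le> 1 / y - 1" using y by (intro ln_le_minus_one) simp
  hence "1 / real (m + 1) \<le> ln y" using y assms by (simp add: ln_div y_def field_simps)
  hence "1 \<le> real (m + 1) * ln y" by (simp add: field_simps)
  hence "exp 1 \<le> exp (real (m + 1) * ln y)" by simp
  also have "\<dots> = y ^ (m + 1)" using y by (subst exp_of_nat_mult) simp
  finally show ?thesis unfolding y_def .
qed

lemma fact_le_pow_div_exp:
  "1 \<le> m \<Longrightarrow> (fact m :: real) \<le> real m ^ (m + 1) / exp (real m - 1)"
proof (induction m rule: nat_induct_at_least)
  case (Suc m)
  have "(fact (Suc m) :: real) = real (m + 1) * fact m" by simp
  also have "\<dots> \<le> real (m + 1) * (real m ^ (m + 1) / exp (real m - 1))"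
    using Suc.IH by (intro mult_left_mono) auto
  also have "\<dots> = real (m + 1) * (real m ^ (m + 1) * exp 1) / exp (real m)"
    by (simp add: exp_diff field_simps)
  also have "\<dots> \<le> real (m + 1) * real (m + 1) ^ (m + 1) / exp (real m)"
  proof -
    have "exp 1 * real m ^ (m + 1) \<le> (1 + 1 / real m) ^ (m + 1) * real m ^ (m + 1)"
      using exp_one_le_one_plus_inverse_pow[OF Suc.hyps] by (rule mult_right_mono) simp
    also have "\<dots> = real (m + 1) ^ (m + 1)"
    proof -
      have "(1 + 1 / real m) * real m = real (m + 1)" using Suc.hyps by (simp add: field_simps)
      thus ?thesis by (metis power_mult_distrib)
    qed
    finally show ?thesis by (intro divide_right_mono mult_left_mono) (simp_all add: mult.commute)
  qed
  finally show ?case by simp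
qed simp

lemma fact_diff_mult_pow_le_fact: "k \<le> n \<Longrightarrow> fact (n - k) * (n - k) ^ k \<le> (fact n :: nat)"
proof (induction k)
  case (Suc k)
  have "fact (n - Suc k) * (n - Suc k) ^ Suc k = (fact (n - Suc k) * (n - Suc k)) * (n - Suc k) ^ k"
    by (simp add: algebra_simps)
  also have "\<dots> \<le> (fact (n - Suc k) * (n - k)) * (n - k) ^ k"
    by (intro mult_mono power_mono) auto
  also have "fact (n - Suc k) * (n - k) = fact (n - k)"
  proof -
    have "n - k = Suc (n - Suc k)" using Suc.prems by simp
    thus ?thesis by simp
  qed
  finally show ?case using Suc by simp
qed simp

lemma binomial_ge_pow_div_fact: "m \<le> n \<Longrightarrow> real (n - m) ^ m / fact m \<le> real (n choose m)"
proof -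
  assume mn: "m \<le> n"
  have "fact m * fact (n - m) * real (n choose m) = fact n"
    using binomial_fact_lemma[OF mn] by (metis of_nat_fact of_nat_mult)
  moreover have "real (fact (n - m) * (n - m) ^ m) \<le> real (fact n)"
    using fact_diff_mult_pow_le_fact[OF mn] by (simp only: of_nat_le_iff)
  ultimately have "fact (n - m) * real (n - m) ^ m \<le> fact (n - m) * (fact m * real (n choose m))"
    by (simp add: algebra_simps)
  hence "real (n - m) ^ m \<le> fact m * real (n choose m)"
    by (rule mult_left_le_imp_le) simp
  thus ?thesis by (simp add: divide_le_eq mult.commute)
qed

lemma binomial_ge_exp:
  assumes "1 \<le> m" "m < n"
  shows "exp (real m * (ln ((real n - real m) / real m) + 1) - 1 - ln (real m)) \<le> real (n choose m)"
proof -
  have m: "real m > 0" and nm: "real n - real m > 0" using assms by simp_all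
  have "exp (real m * (ln ((real n - real m) / real m) + 1) - 1 - ln (real m)) =
        ((real n - real m) / real m) ^ m * exp (real m - 1) / real m"
    using m nm by (simp add: exp_diff exp_add exp_of_nat_mult algebra_simps)
  also have "\<dots> = real (n - m) ^ m / (real m ^ (m + 1) / exp (real m - 1))"
    using assms by (simp add: power_divide of_nat_diff field_simps)
  also have "\<dots> \<le> real (n - m) ^ m / fact m"
  proof (rule divide_left_mono[OF fact_le_pow_div_exp[OF assms(1)]])
    show "0 < real m ^ (m + 1) / exp (real m - 1) * fact m" using m by (intro mult_pos_pos divide_pos_pos) auto
  qed simp
  also have "\<dots> \<le> real (n choose m)" using assms by (intro binomial_ge_pow_div_fact) simp
  finally show ?thesis .
qed

lemma one_minus_pow_ge_exp:
  assumes "0 \<le> r" "r \<le> 1/2"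
  shows "exp (- real n * (r + 2 * r\<^sup>2)) \<le> (1 - r) ^ n"
proof -
  have "- r - 2 * r\<^sup>2 \<le> ln (1 - r)" using ln_one_minus_pos_lower_bound[of r] assms by simp
  hence "real n * (- r - 2 * r\<^sup>2) \<le> real n * ln (1 - r)" by (intro mult_left_mono) simp_all
  hence "exp (- real n * (r + 2 * r\<^sup>2)) \<le> exp (real n * ln (1 - r))" by (simp add: algebra_simps)
  also have "\<dots> = (1 - r) ^ n" using assms by (subst exp_of_nat_mult) simp
  finally show ?thesis .
qed

lemma pattern_prob_ge_exp:
  assumes m: "1 \<le> m" "m < n" and r: "0 < r" "r \<le> 1/2" and \<rho>: "0 < \<rho>"
  shows "exp (real m * (ln ((real n - real m) * r * \<rho> / real m) + 1) - 1 - ln (real m)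
              - real n * (r + 2 * r\<^sup>2)) \<le> pattern_prob n m r \<rho>"
proof -
  have pos: "(real n - real m) / real m > 0" "r * \<rho> > 0" using m r \<rho> by simp_all
  have "exp (real m * (ln ((real n - real m) * r * \<rho> / real m) + 1) - 1 - ln (real m) - real n * (r + 2 * r\<^sup>2)) =
        exp (real m * (ln ((real n - real m) / real m) + 1) - 1 - ln (real m)) * (r * \<rho>) ^ m *
        exp (- real n * (r + 2 * r\<^sup>2))"
  proof -
    have "(real n - real m) * r * \<rho> / real m = ((real n - real m) / real m) * (r * \<rho>)" by simp
    hence "real m * (ln ((real n - real m) * r * \<rho> / real m) + 1) - 1 - ln (real m) - real n * (r + 2 * r\<^sup>2) =
           (real m * (ln ((real n - real m) / real m) + 1) - 1 - ln (real m)) + real m * ln (r * \<rho>) +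
           (- real n * (r + 2 * r\<^sup>2))"
      using pos by (simp only: ln_mult_pos) (simp add: algebra_simps)
    moreover have "exp (real m * ln (r * \<rho>)) = (r * \<rho>) ^ m" using pos by (simp add: exp_of_nat_mult)
    ultimately show ?thesis by (simp only: exp_add)
  qed
  also have "\<dots> \<le> real (n choose m) * (r * \<rho>) ^ m * (1 - r) ^ (n - m)"
  proof (rule mult_mono)
    show "exp (real m * (ln ((real n - real m) / real m) + 1) - 1 - ln (real m)) * (r * \<rho>) ^ m \<le>
          real (n choose m) * (r * \<rho>) ^ m"
      using binomial_ge_exp[OF m] pos by (intro mult_right_mono) simp_all
    have "(1 - r) ^ n \<le> (1 - r) ^ (n - m)" using r by (intro power_decreasing) simp_all
    with one_minus_pow_ge_exp[OF less_imp_le[OF r(1)] r(2)]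
    show "exp (- real n * (r + 2 * r\<^sup>2)) \<le> (1 - r) ^ (n - m)" by (rule order_trans)
  qed (use pos in simp_all)
  finally show ?thesis unfolding pattern_prob_def .
qed

section \<open>Asymptotics\<close>

lemma tendsto_nat_ceiling_div:
  fixes f :: "'a \<Rightarrow> real"
  assumes c: "0 \<le> c" and f: "filterlim f at_top F"
  shows "((\<lambda>x. real (nat \<lceil>c * f x\<rceil>) / f x) \<longlongrightarrow> c) F"
proof (rule tendsto_sandwich)
  have f_pos: "\<forall>\<^sub>F x in F. f x > 0" using f by (simp add: filterlim_at_top_dense)
  have bounds: "c * f x \<le> real (nat \<lceil>c * f x\<rceil>)" "real (nat \<lceil>c * f x\<rceil>) \<le> c * f x + 1" if "f x > 0" for x
    using c that by (simp_all add: of_nat_nat ceiling_correct)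
  show "\<forall>\<^sub>F x in F. c \<le> real (nat \<lceil>c * f x\<rceil>) / f x"
    using f_pos by eventually_elim (use bounds in \<open>simp add: pos_le_divide_eq\<close>)
  show "\<forall>\<^sub>F x in F. real (nat \<lceil>c * f x\<rceil>) / f x \<le> c + inverse (f x)"
    using f_pos by eventually_elim (use bounds in \<open>simp add: pos_divide_le_eq field_simps\<close>)
  show "((\<lambda>x. c + inverse (f x)) \<longlongrightarrow> c) F"
    using tendsto_add[OF tendsto_const tendsto_inverse_0_at_top[OF f], of c] by simp
qed simp

lemma tendsto_one_minus_pow:
  assumes r: "\<forall>\<^sub>F x in F. 0 \<le> r x \<and> r x \<le> 1" and mr: "((\<lambda>x. real (m x) * r x) \<longlongrightarrow> 0) F"
  shows "((\<lambda>x. (1 - r x) ^ m x) \<longlongrightarrow> 1) F"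
proof (rule tendsto_sandwich)
  show "\<forall>\<^sub>F x in F. 1 - real (m x) * r x \<le> (1 - r x) ^ m x"
    using r by eventually_elim (use Bernoulli_inequality[of "- r _"] in simp)
  show "\<forall>\<^sub>F x in F. (1 - r x) ^ m x \<le> 1"
    using r by eventually_elim (simp add: power_le_one)
  show "((\<lambda>x. 1 - real (m x) * r x) \<longlongrightarrow> 1) F"
    using tendsto_diff[OF tendsto_const mr, of 1] by simp
qed simp

lemma tendsto_isolation_prob:
  "((\<lambda>k. real k * isolation_prob (\<nu> / real k) k) \<longlongrightarrow> \<nu> * exp (- \<nu>)) sequentially"
proof -
  have "((\<lambda>k. \<nu> * (1 + (- \<nu>) / real k) ^ k / (1 - \<nu> / real k)) \<longlongrightarrow> \<nu> * exp (- \<nu>) / (1 - 0)) sequentially"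
    by (intro tendsto_intros tendsto_exp_limit_sequentially tendsto_divide_0[OF tendsto_const]
              filterlim_real_sequentially) simp
  moreover have "\<forall>\<^sub>F k in sequentially. \<nu> * (1 + (- \<nu>) / real k) ^ k / (1 - \<nu> / real k) =
                                         real k * isolation_prob (\<nu> / real k) k"
    using eventually_gt_at_top[of "nat \<lceil>\<bar>\<nu>\<bar>\<rceil>"]
  proof eventually_elim
    case (elim k)
    hence k: "real k > \<bar>\<nu>\<bar>" by linarith
    hence "1 - \<nu> / real k \<noteq> 0" by (auto simp: field_simps)
    moreover have "(1 - \<nu> / real k) ^ k = (1 - \<nu> / real k) ^ (k - 1) * (1 - \<nu> / real k)"
      using k by (cases k) simp_all
    moreover have "real k \<noteq> \<nu>" "k > 0" using k by linarith+
    ultimately show ?case by (simp add: isolation_prob_def)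
  qed
  ultimately show ?thesis by (simp add: tendsto_cong)
qed

locale sparse_regime =
  fixes \<theta> \<nu> \<rho> \<Psi> \<gamma> :: real and k :: "nat \<Rightarrow> nat"
  assumes \<theta>_pos: "0 < \<theta>" and \<theta>_less_1: "\<theta> < 1" and \<nu>_pos: "0 < \<nu>"
    and \<rho>_pos: "0 < \<rho>" and \<rho>_le_1: "\<rho> \<le> 1" and \<rho>_le_\<Psi>: "\<rho> \<le> \<Psi>" and \<gamma>_pos: "0 < \<gamma>"
    and k_Theta: "(\<lambda>p. real (k p)) \<in> \<Theta>(\<lambda>p. real p powr \<theta>)"
    and threshold: "\<theta> > exp (- \<nu>) * \<nu> * \<gamma> * (Dfun \<rho> \<Psi> + 1 - \<rho>)"
begin

lemma ln_k_over_ln: "((\<lambda>p. ln (real (k p)) / ln (real p)) \<longlongrightarrow> \<theta>) at_top"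
proof -
  obtain C where C: "C > 0" "\<forall>\<^sub>F p in at_top. real (k p) \<le> C * real p powr \<theta>"
    using bigthetaD1[OF k_Theta] by (rule landau_o.bigE) auto
  obtain c where c: "c > 0" "\<forall>\<^sub>F p in at_top. c * real p powr \<theta> \<le> real (k p)"
    using bigthetaD2[OF k_Theta] by (rule landau_omega.bigE) auto
  have bounds: "\<forall>\<^sub>F p in at_top. (ln c + \<theta> * ln (real p)) / ln (real p) \<le> ln (real (k p)) / ln (real p) \<and>
                        ln (real (k p)) / ln (real p) \<le> (ln C + \<theta> * ln (real p)) / ln (real p)"
    using C(2) c(2) eventually_ge_at_top[of 2]
  proof eventually_elim
    case (elim p)
    have pos: "c * real p powr \<theta> > 0" "ln (real p) > 0" using c(1) elim(3) by simp_all
    have "ln (c * real p powr \<theta>) \<le> ln (real (k p))" "ln (real (k p)) \<le> ln (C * real p powr \<theta>)"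
      using elim pos by (intro ln_mono; linarith)+
    moreover have "ln (c * real p powr \<theta>) = ln c + \<theta> * ln (real p)"
                  "ln (C * real p powr \<theta>) = ln C + \<theta> * ln (real p)"
      using c(1) C(1) elim(3) by (simp_all add: ln_mult_pos ln_powr)
    ultimately show ?case using pos by (auto intro: divide_right_mono)
  qed
  have "((\<lambda>p::nat. (ln c + \<theta> * ln (real p)) / ln (real p)) \<longlongrightarrow> \<theta>) at_top"
       "((\<lambda>p::nat. (ln C + \<theta> * ln (real p)) / ln (real p)) \<longlongrightarrow> \<theta>) at_top"
    by real_asymp+
  moreover note eventually_mono[OF bounds conjunct1] eventually_mono[OF bounds conjunct2]
  ultimately show ?thesis by (rule tendsto_sandwich[rotated 2])
qed

lemma eventually_k_bounds: "\<forall>\<^sub>F p in at_top. real p powr (\<theta> / 2) < real (k p) \<and> k p < p"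
proof -
  have "\<forall>\<^sub>F p in at_top. \<theta> / 2 < ln (real (k p)) / ln (real p)"
    by (rule order_tendstoD(1)[OF ln_k_over_ln]) (use \<theta>_pos in simp)
  moreover have "\<forall>\<^sub>F p in at_top. ln (real (k p)) / ln (real p) < 1"
    by (rule order_tendstoD(2)[OF ln_k_over_ln \<theta>_less_1])
  ultimately show ?thesis using eventually_ge_at_top[of 2]
  proof eventually_elim
    case (elim p)
    hence L: "ln (real p) > 0" by simp
    hence lo: "\<theta> / 2 * ln (real p) < ln (real (k p))" and hi: "ln (real (k p)) < ln (real p)"
      using elim by (simp_all add: field_simps)
    have "0 < \<theta> / 2 * ln (real p)" using L \<theta>_pos by simp
    hence "k p > 0" using lo by (cases "k p = 0") simp_all
    hence "exp (\<theta> / 2 * ln (real p)) < real (k p)"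
      using lo by (metis exp_less_cancel_iff exp_ln of_nat_0_less_iff)
    moreover have "k p < p" using hi \<open>k p > 0\<close> \<open>2 \<le> p\<close> by simp
    ultimately have "exp (\<theta> / 2 * ln (real p)) < real (k p) \<and> k p < p" by simp
    thus ?case using elim(2) by (simp add: powr_def mult.commute)
  qed
qed

lemma k_at_top: "filterlim (\<lambda>p. real (k p)) at_top at_top"
proof (rule filterlim_at_top_mono)
  show "filterlim (\<lambda>p::nat. real p powr (\<theta> / 2)) at_top at_top" using \<theta>_pos by real_asymp
  show "\<forall>\<^sub>F p in at_top. real p powr (\<theta> / 2) \<le> real (k p)"
    using eventually_k_bounds by (rule eventually_mono) simp
qed

lemma k_at_top_nat: "filterlim k at_top at_top"
  using k_at_top by (simp add: filterlim_at_top) (metis (mono_tags) eventually_mono of_nat_le_iff)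

lemma ln_over_k: "((\<lambda>p. ln (real p) / real (k p)) \<longlongrightarrow> 0) at_top"
proof (rule tendsto_sandwich)
  show "\<forall>\<^sub>F p in at_top. 0 \<le> ln (real p) / real (k p)"
    using eventually_ge_at_top[of 1] by eventually_elim simp
  show "\<forall>\<^sub>F p in at_top. ln (real p) / real (k p) \<le> ln (real p) / real p powr (\<theta> / 2)"
    using eventually_k_bounds eventually_ge_at_top[of 1]
  proof eventually_elim
    case (elim p)
    hence "0 < real p powr (\<theta> / 2)" by simp
    moreover from this have "0 < real (k p)" using elim by linarith
    ultimately show ?case using elim by (intro divide_left_mono) simp_all
  qed
  show "((\<lambda>p::nat. ln (real p) / real p powr (\<theta> / 2)) \<longlongrightarrow> 0) at_top" using \<theta>_pos by real_asymp
qed simp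

definition iso :: "nat \<Rightarrow> real" where
  "iso p = isolation_prob (\<nu> / real (k p)) (k p)"

definition tests :: "nat \<Rightarrow> nat" where
  "tests p = nat \<lceil>\<gamma> * real (k p) * ln (real p)\<rceil>"

definition negatives :: "nat \<Rightarrow> nat" where
  "negatives p = nat \<lceil>\<Psi> * \<nu> * exp (- \<nu>) * \<gamma> * ln (real p)\<rceil>"

lemma \<Psi>_pos: "0 < \<Psi>"
  using \<rho>_pos \<rho>_le_\<Psi> by linarith

lemma eventually_k_ln_pos: "\<forall>\<^sub>F p in at_top. 0 < real (k p) \<and> 0 < ln (real p)"
  using eventually_k_bounds eventually_ge_at_top[of 2]
proof eventually_elim
  case (elim p)
  have "0 < real p powr (\<theta> / 2)" using elim(2) by simp
  hence "0 < real (k p)" using elim(1) by linarith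
  thus ?case using elim(2) by simp
qed

lemma k_iso: "((\<lambda>p. real (k p) * iso p) \<longlongrightarrow> \<nu> * exp (- \<nu>)) at_top"
  using filterlim_compose[OF tendsto_isolation_prob k_at_top_nat] unfolding iso_def o_def .

lemma iso_tendsto_0: "(iso \<longlongrightarrow> 0) at_top"
proof -
  have "((\<lambda>p. real (k p) * iso p * inverse (real (k p))) \<longlongrightarrow> 0) at_top"
    using tendsto_mult[OF k_iso tendsto_inverse_0_at_top[OF k_at_top]] by simp
  moreover have "\<forall>\<^sub>F p in at_top. real (k p) * iso p * inverse (real (k p)) = iso p"
    using eventually_k_ln_pos by eventually_elim simp
  ultimately show ?thesis by (rule Lim_transform_eventually)
qed

lemma tests_iso_over_ln: "((\<lambda>p. real (tests p) * iso p / ln (real p)) \<longlongrightarrow> \<gamma> * (\<nu> * exp (- \<nu>))) at_top"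
proof -
  have "filterlim (\<lambda>p. real (k p) * ln (real p)) at_top at_top"
    by (intro filterlim_at_top_mult_at_top k_at_top) real_asymp
  from tendsto_nat_ceiling_div[OF less_imp_le[OF \<gamma>_pos] this]
  have "((\<lambda>p. real (tests p) / (real (k p) * ln (real p)) * (real (k p) * iso p)) \<longlongrightarrow> \<gamma> * (\<nu> * exp (- \<nu>))) at_top"
    unfolding tests_def mult.assoc by (intro tendsto_mult k_iso)
  moreover have "\<forall>\<^sub>F p in at_top. real (tests p) / (real (k p) * ln (real p)) * (real (k p) * iso p) =
                                  real (tests p) * iso p / ln (real p)"
    using eventually_k_ln_pos by eventually_elim simp
  ultimately show ?thesis by (rule Lim_transform_eventually)
qed

lemma negatives_over_ln: "((\<lambda>p. real (negatives p) / ln (real p)) \<longlongrightarrow> \<Psi> * \<nu> * exp (- \<nu>) * \<gamma>) at_top"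
  unfolding negatives_def
proof (rule tendsto_nat_ceiling_div)
  show "0 \<le> \<Psi> * \<nu> * exp (- \<nu>) * \<gamma>" using \<Psi>_pos \<nu>_pos \<gamma>_pos by simp
  show "filterlim (\<lambda>p::nat. ln (real p)) at_top at_top" by real_asymp
qed

lemma negatives_iso: "((\<lambda>p. real (negatives p) * iso p) \<longlongrightarrow> 0) at_top"
proof -
  have "((\<lambda>p. real (negatives p) / ln (real p) * (ln (real p) / real (k p)) * (real (k p) * iso p))
         \<longlongrightarrow> 0) at_top"
    using tendsto_mult[OF tendsto_mult[OF negatives_over_ln ln_over_k] k_iso] by simp
  moreover have "\<forall>\<^sub>F p in at_top. real (negatives p) / ln (real p) * (ln (real p) / real (k p)) * (real (k p) * iso p) =
                                  real (negatives p) * iso p"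
    using eventually_k_ln_pos by eventually_elim simp
  ultimately show ?thesis by (rule Lim_transform_eventually)
qed

lemma eventually_negatives_pos: "\<forall>\<^sub>F p in at_top. 0 < negatives p"
  using eventually_k_ln_pos
  by eventually_elim (use \<Psi>_pos \<nu>_pos \<gamma>_pos in \<open>simp add: negatives_def\<close>)

lemma binomial_ratio_limit:
  "((\<lambda>p. (real (tests p) - real (negatives p)) * iso p * \<rho> / real (negatives p)) \<longlongrightarrow> \<rho> / \<Psi>) at_top"
proof -
  have "((\<lambda>p. \<rho> * (real (tests p) * iso p / ln (real p) - real (negatives p) / ln (real p) * iso p) /
                  (real (negatives p) / ln (real p)))
        \<longlongrightarrow> \<rho> * (\<gamma> * (\<nu> * exp (- \<nu>)) - \<Psi> * \<nu> * exp (- \<nu>) * \<gamma> * 0) / (\<Psi> * \<nu> * exp (- \<nu>) * \<gamma>)) at_top"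
    using \<Psi>_pos \<nu>_pos \<gamma>_pos
    by (intro tendsto_intros tests_iso_over_ln negatives_over_ln iso_tendsto_0) simp
  moreover have "\<rho> * (\<gamma> * (\<nu> * exp (- \<nu>)) - \<Psi> * \<nu> * exp (- \<nu>) * \<gamma> * 0) / (\<Psi> * \<nu> * exp (- \<nu>) * \<gamma>) = \<rho> / \<Psi>"
    using \<Psi>_pos \<nu>_pos \<gamma>_pos by simp
  ultimately have lim: "((\<lambda>p. \<rho> * (real (tests p) * iso p / ln (real p) - real (negatives p) / ln (real p) * iso p) /
                  (real (negatives p) / ln (real p))) \<longlongrightarrow> \<rho> / \<Psi>) at_top"
    by simp
  have "\<forall>\<^sub>F p in at_top.
      \<rho> * (real (tests p) * iso p / ln (real p) - real (negatives p) / ln (real p) * iso p) /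
        (real (negatives p) / ln (real p)) =
      (real (tests p) - real (negatives p)) * iso p * \<rho> / real (negatives p)"
    using eventually_k_ln_pos eventually_negatives_pos
  proof eventually_elim
    case (elim p)
    hence "ln (real p) \<noteq> 0" "real (negatives p) \<noteq> 0" by auto
    thus ?case by (simp add: field_simps)
  qed
  with lim show ?thesis by (rule Lim_transform_eventually)
qed

lemma ln_negatives_over_ln: "((\<lambda>p. ln (real (negatives p)) / ln (real p)) \<longlongrightarrow> 0) at_top"
proof -
  have "((\<lambda>p. ln (real (negatives p) / ln (real p)) * inverse (ln (real p)) + ln (ln (real p)) / ln (real p))
         \<longlongrightarrow> ln (\<Psi> * \<nu> * exp (- \<nu>) * \<gamma>) * 0 + 0) at_top"
  proof (intro tendsto_intros negatives_over_ln)
    show "\<Psi> * \<nu> * exp (- \<nu>) * \<gamma> \<noteq> 0" using \<Psi>_pos \<nu>_pos \<gamma>_pos by simp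
    show "((\<lambda>p::nat. inverse (ln (real p))) \<longlongrightarrow> 0) at_top" by real_asymp
    show "((\<lambda>p::nat. ln (ln (real p)) / ln (real p)) \<longlongrightarrow> 0) at_top" by real_asymp
  qed
  hence "((\<lambda>p. ln (real (negatives p) / ln (real p)) * inverse (ln (real p)) + ln (ln (real p)) / ln (real p))
         \<longlongrightarrow> 0) at_top" by simp
  moreover have "\<forall>\<^sub>F p in at_top.
      ln (real (negatives p) / ln (real p)) * inverse (ln (real p)) + ln (ln (real p)) / ln (real p) =
      ln (real (negatives p)) / ln (real p)"
    using eventually_k_ln_pos eventually_negatives_pos
  proof eventually_elim
    case (elim p)
    hence ln_ratio: "ln (real (negatives p) / ln (real p)) = ln (real (negatives p)) - ln (ln (real p))"
      by (intro ln_divide_pos) simp_all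
    show ?case unfolding ln_ratio by (simp add: divide_inverse left_diff_distrib)
  qed
  ultimately show ?thesis by (rule Lim_transform_eventually)
qed

definition exponent :: "nat \<Rightarrow> real" where
  "exponent p = ln (real (k p))
     + real (negatives p) * (ln ((real (tests p) - real (negatives p)) * iso p * \<rho> / real (negatives p)) + 1)
     - 1 - ln (real (negatives p)) - real (tests p) * (iso p + 2 * (iso p)\<^sup>2)"

lemma exponent_over_ln:
  "((\<lambda>p. exponent p / ln (real p)) \<longlongrightarrow>
     \<theta> + \<Psi> * \<nu> * exp (- \<nu>) * \<gamma> * (ln (\<rho> / \<Psi>) + 1) - \<gamma> * (\<nu> * exp (- \<nu>))) at_top"
proof -
  have "((\<lambda>p. ln (real (k p)) / ln (real p)
              + real (negatives p) / ln (real p) *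
                (ln ((real (tests p) - real (negatives p)) * iso p * \<rho> / real (negatives p)) + 1)
              - inverse (ln (real p)) - ln (real (negatives p)) / ln (real p)
              - real (tests p) * iso p / ln (real p) * (1 + 2 * iso p))
        \<longlongrightarrow> \<theta> + \<Psi> * \<nu> * exp (- \<nu>) * \<gamma> * (ln (\<rho> / \<Psi>) + 1) - 0 - 0
              - \<gamma> * (\<nu> * exp (- \<nu>)) * (1 + 2 * 0)) at_top"
  proof (intro ln_k_over_ln negatives_over_ln ln_negatives_over_ln tests_iso_over_ln iso_tendsto_0
               tendsto_ln[OF binomial_ratio_limit] tendsto_intros)
    show "\<rho> / \<Psi> \<noteq> 0" using \<rho>_pos \<Psi>_pos by simp
    show "((\<lambda>p::nat. inverse (ln (real p))) \<longlongrightarrow> 0) at_top" by real_asymp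
  qed
  moreover have "\<forall>\<^sub>F p in at_top.
      ln (real (k p)) / ln (real p)
        + real (negatives p) / ln (real p) *
          (ln ((real (tests p) - real (negatives p)) * iso p * \<rho> / real (negatives p)) + 1)
        - inverse (ln (real p)) - ln (real (negatives p)) / ln (real p)
        - real (tests p) * iso p / ln (real p) * (1 + 2 * iso p) = exponent p / ln (real p)"
    using eventually_k_ln_pos
    by eventually_elim (simp add: exponent_def add_divide_distrib diff_divide_distrib divide_inverse
                                  power2_eq_square algebra_simps)
  ultimately show ?thesis by (simp add: Lim_transform_eventually)
qed

lemma exponent_rate_pos: "0 < \<theta> + \<Psi> * \<nu> * exp (- \<nu>) * \<gamma> * (ln (\<rho> / \<Psi>) + 1) - \<gamma> * (\<nu> * exp (- \<nu>))"
proof -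
  have "ln (\<rho> / \<Psi>) = - ln (\<Psi> / \<rho>)" using \<rho>_pos \<Psi>_pos by (simp add: ln_divide_pos)
  hence "\<theta> + \<Psi> * \<nu> * exp (- \<nu>) * \<gamma> * (ln (\<rho> / \<Psi>) + 1) - \<gamma> * (\<nu> * exp (- \<nu>)) =
         \<theta> - exp (- \<nu>) * \<nu> * \<gamma> * (Dfun \<rho> \<Psi> + 1 - \<rho>)"
    unfolding Dfun_def by (simp add: algebra_simps)
  thus ?thesis using threshold by simp
qed

lemma exponent_at_top: "filterlim exponent at_top at_top"
proof (rule filterlim_at_top_mono)
  show "filterlim (\<lambda>p. exponent p / ln (real p) * ln (real p)) at_top at_top"
    by (rule filterlim_tendsto_pos_mult_at_top[OF exponent_over_ln exponent_rate_pos]) real_asymp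
  show "\<forall>\<^sub>F p in at_top. exponent p / ln (real p) * ln (real p) \<le> exponent p"
    using eventually_k_ln_pos by eventually_elim simp
qed

lemma eventually_admissible:
  "\<forall>\<^sub>F p in at_top. 0 < k p \<and> k p \<le> p \<and> \<nu> / real (k p) \<le> 1 \<and> 0 < iso p \<and> iso p \<le> 1/2 \<and>
                     1 \<le> negatives p \<and> 2 * negatives p < tests p"
proof -
  have "filterlim (\<lambda>p. real (tests p) * iso p / ln (real p) * ln (real p)) at_top at_top"
    using \<nu>_pos \<gamma>_pos by (intro filterlim_tendsto_pos_mult_at_top[OF tests_iso_over_ln]) (simp, real_asymp)
  hence "\<forall>\<^sub>F p in at_top. 1 < real (tests p) * iso p / ln (real p) * ln (real p)"
    by (simp add: filterlim_at_top_dense)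
  moreover have "\<forall>\<^sub>F p in at_top. real (negatives p) * iso p < 1/2"
    by (rule order_tendstoD(2)[OF negatives_iso]) simp
  moreover have "\<forall>\<^sub>F p in at_top. iso p < 1/2"
    by (rule order_tendstoD(2)[OF iso_tendsto_0]) simp
  moreover have "\<forall>\<^sub>F p in at_top. \<nu> < real (k p)"
    using k_at_top by (simp add: filterlim_at_top_dense)
  ultimately show ?thesis using eventually_k_bounds eventually_k_ln_pos eventually_negatives_pos
  proof eventually_elim
    case (elim p)
    have q: "0 < \<nu> / real (k p)" "\<nu> / real (k p) < 1" using elim \<nu>_pos by (simp_all add: field_simps)
    hence iso_pos: "0 < iso p" unfolding iso_def isolation_prob_def by (intro mult_pos_pos zero_less_power) simp_all
    \<comment> \<open>\<open>n r \<rightarrow> \<infinity>\<close> while \<open>m r \<rightarrow> 0\<close>\<close>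
    have "real (2 * negatives p) * iso p < real (tests p) * iso p" using elim by simp
    hence "2 * negatives p < tests p" using iso_pos by (simp only: mult_less_cancel_right) simp
    thus ?case using elim q iso_pos by auto
  qed
qed

lemma k_pattern_prob_at_top:
  "filterlim (\<lambda>p. real (k p) * pattern_prob (tests p) (negatives p) (iso p) \<rho>) at_top at_top"
proof (rule filterlim_at_top_mono[OF filterlim_compose[OF exp_at_top exponent_at_top]])
  show "\<forall>\<^sub>F p in at_top. exp (exponent p) \<le> real (k p) * pattern_prob (tests p) (negatives p) (iso p) \<rho>"
    using eventually_admissible
  proof eventually_elim
    case (elim p)
    have "exp (exponent p) = real (k p) *
            exp (real (negatives p) * (ln ((real (tests p) - real (negatives p)) * iso p * \<rho> / real (negatives p)) + 1)
                 - 1 - ln (real (negatives p)) - real (tests p) * (iso p + 2 * (iso p)\<^sup>2))"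
      using elim by (simp add: exponent_def exp_add exp_diff)
    also have "\<dots> \<le> real (k p) * pattern_prob (tests p) (negatives p) (iso p) \<rho>"
      using elim \<rho>_pos by (intro mult_left_mono pattern_prob_ge_exp) simp_all
    finally show ?case .
  qed
qed

lemma inverse_one_minus_iso_pow_tendsto_1: "((\<lambda>p. 1 / (1 - iso p) ^ (2 * negatives p)) \<longlongrightarrow> 1) at_top"
proof -
  have "((\<lambda>p. (1 - iso p) ^ (2 * negatives p)) \<longlongrightarrow> 1) at_top"
  proof (rule tendsto_one_minus_pow)
    show "\<forall>\<^sub>F p in at_top. 0 \<le> iso p \<and> iso p \<le> 1" using eventually_admissible by eventually_elim simp
    show "((\<lambda>p. real (2 * negatives p) * iso p) \<longlongrightarrow> 0) at_top"
      using tendsto_mult[OF tendsto_const[of 2] negatives_iso] by (simp add: mult.assoc)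
  qed
  thus ?thesis using tendsto_divide[OF tendsto_const[of 1]] by fastforce
qed

lemma success_prob_tendsto_1:
  "((\<lambda>p. measure_pmf.prob (gt_pmf p (k p) (tests p) \<nu> \<rho>)
          {(S, X, Y). \<exists>i\<in>S. Mplus (tests p) S X Y i = 0 \<and>
                       \<Psi> * \<nu> * exp (- \<nu>) * \<gamma> * ln (real p) \<le> real (Mminus (tests p) S X Y i)})
    \<longlongrightarrow> 1) at_top"
proof (rule tendsto_sandwich)
  let ?P = "\<lambda>p. pattern_prob (tests p) (negatives p) (iso p) \<rho>"
  show "\<forall>\<^sub>F p in at_top. 2 - 1 / (real (k p) * ?P p) - 1 / (1 - iso p) ^ (2 * negatives p) \<le>
          measure_pmf.prob (gt_pmf p (k p) (tests p) \<nu> \<rho>)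
            {(S, X, Y). \<exists>i\<in>S. Mplus (tests p) S X Y i = 0 \<and>
                         \<Psi> * \<nu> * exp (- \<nu>) * \<gamma> * ln (real p) \<le> real (Mminus (tests p) S X Y i)}"
    using eventually_admissible
  proof eventually_elim
    case (elim p)
    have P_pos: "?P p > 0"
      using elim \<rho>_pos unfolding pattern_prob_def by (intro mult_pos_pos zero_less_power) simp_all
    show ?case
    proof (rule measure_gt_pmf_ge)
      show "\<Psi> * \<nu> * exp (- \<nu>) * \<gamma> * ln (real p) \<le> real (negatives p)"
        unfolding negatives_def by (rule real_nat_ceiling_ge)
      fix S assume S: "S \<subseteq> {1..p}" "card S = k p"
      hence "S \<noteq> {}" using elim by auto
      thus "2 - 1 / (real (k p) * ?P p) - 1 / (1 - iso p) ^ (2 * negatives p) \<le>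
            measure_pmf.prob (test_pmf p (tests p) S (\<nu> / real (k p)) \<rho>)
              {(X, Y). \<exists>i\<in>S. Mplus (tests p) S X Y i = 0 \<and> Mminus (tests p) S X Y i = negatives p}"
        using measure_test_pmf_isolated_negatives_ge[OF S(1)] elim S P_pos \<rho>_pos \<rho>_le_1 \<nu>_pos
        by (simp add: iso_def)
    qed (use elim in simp)
  qed
  show "\<forall>\<^sub>F p in at_top. measure_pmf.prob (gt_pmf p (k p) (tests p) \<nu> \<rho>)
            {(S, X, Y). \<exists>i\<in>S. Mplus (tests p) S X Y i = 0 \<and>
                         \<Psi> * \<nu> * exp (- \<nu>) * \<gamma> * ln (real p) \<le> real (Mminus (tests p) S X Y i)} \<le> 1"
    by simp
  have "((\<lambda>p. 2 - inverse (real (k p) * ?P p) - 1 / (1 - iso p) ^ (2 * negatives p)) \<longlongrightarrow> 2 - 0 - 1) at_top"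
    by (intro tendsto_diff tendsto_const tendsto_inverse_0_at_top k_pattern_prob_at_top inverse_one_minus_iso_pow_tendsto_1)
  thus "((\<lambda>p. 2 - 1 / (real (k p) * ?P p) - 1 / (1 - iso p) ^ (2 * negatives p)) \<longlongrightarrow> 1) at_top"
    by (simp add: divide_inverse)
qed simp

end

theorem lemma4:
  fixes \<theta> \<nu> \<rho> \<Psi> \<gamma> :: real and k :: "nat \<Rightarrow> nat"
  assumes "0 < \<theta>" "\<theta> < 1" "0 < \<nu>" "0 < \<rho>" "\<rho> < 1" "\<rho> \<le> \<Psi>" "\<Psi> < 1" "0 < \<gamma>"
    and "(\<lambda>p. real (k p)) \<in> \<Theta>(\<lambda>p. real p powr \<theta>)"
    and "\<theta> > exp (- \<nu>) * \<nu> * \<gamma> * (Dfun \<rho> \<Psi> + 1 - \<rho>)"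
  shows "((\<lambda>p. let n = nat \<lceil>\<gamma> * real (k p) * ln (real p)\<rceil>;
                   d = \<Psi> * \<nu> * exp (- \<nu>) * \<gamma> * ln (real p)
               in measure_pmf.prob (gt_pmf p (k p) n \<nu> \<rho>)
                    {(S, X, Y). \<exists>i\<in>S. Mplus n S X Y i = 0 \<and> real (Mminus n S X Y i) \<ge> d})
          \<longlongrightarrow> 1) at_top"
proof -
  interpret sparse_regime \<theta> \<nu> \<rho> \<Psi> \<gamma> k
    using assms by unfold_locales simp_all
  show ?thesis using success_prob_tendsto_1 unfolding tests_def Let_def .
qed

end
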